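(* Let $G$ be a finite group with the supercharacter theory for which $\mathrm{scf}(G)=\mathbb{C}\text{-span}\{\mathbb{1},\mathbf{reg}\}$, and let $\iota,\alpha,\beta\in\mathrm{scf}(G)$ with $\langle\iota,\alpha\rangle=\langle\iota,\beta\rangle=1$. Let $S$ be the antipode of $\mathcal{H}_{(\iota,\alpha,\beta)}$ and $n\ge1$. (Case $\alpha=\beta$.) If $\tau\in\mathrm{scf}(G)$ is nonzero with $\langle\tau,\beta\rangle=0$ and $\mathbb{C}\text{-span}\{\tau,\iota\}=\mathrm{scf}(G)$, then $S(\tau^{\otimes(n-1)}\otimes\chi^{()})=-\tau^{\otimes(n-1)}\otimes\chi^{()}$. (Case $\alpha\ne\beta$.) If $\tau\in\mathrm{scf}(G)$ satisfies $\langle\tau,\alpha\rangle=1$ and $\langle\tau,\beta\rangle=0$, then $S(\tau^{\otimes(n-1)}\otimes\chi^{()})=-(\tau-\iota)^{\otimes(n-1)}\otimes\chi^{()}$.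
   Context: $G$ is a nontrivial finite group; the supercharacter theory has superclasses $\{1\}$ and $G\setminus\{1\}$ and supercharacters $\mathbb{1}$ (trivial character) and $\mathbf{reg}-\mathbb{1}$ ($\mathbf{reg}$ the regular character), so $\mathrm{scf}(G)$ is the space of functions constant on $G\setminus\{1\}$; $\langle\psi,\gamma\rangle=|G|^{-1}\sum_g\psi(g)\overline{\gamma(g)}$. For $n\ge1$, $G^{n-1}=G\times\cdots\times G\times\{1\}$ ($n-1$ copies of $G$), $\mathrm{scf}(G^{n-1})$ is spanned by $\psi_1\otimes\cdots\otimes\psi_{n-1}\otimes\chi^{()}:(g_1,\dots,g_{n-1},1)\mapsto\prod\psi_j(g_j)$ ($\chi^{()}$ trivial character of the trivial group); $\mathrm{scf}(G^{-1}):=\mathbb{C}\chi^\emptyset$. $\mathcal{H}_{(\iota,\alpha,\beta)}=\bigoplus_{n\ge0}\mathrm{scf}(G^{n-1})$ is the graded connected Hopf algebra with unit $\chi^\emptyset$, product $(\gamma_1\otimes\cdots\otimes\gamma_{m-1}\otimes\chi^{()})\cdot(\psi_1\otimes\cdots\otimes\psi_{n-1}\otimes\chi^{()})=\gamma_1\otimes\cdots\otimes\gamma_{m-1}\otimes\iota\otimes\psi_1\otimes\cdots\otimes\psi_{n-1}\otimes\chi^{()}$, coproduct $\Delta(\psi)=\sum_{A\subseteq[n]}\psi^{A}\otimes\psi^{[n]\setminus A}$ for $\psi=\psi_1\otimes\cdots\otimes\psi_{n-1}\otimes\chi^{()}$, where $\psi^\emptyset=\chi^\emptyset$; for nonempty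 $A=\{a_1<\dots<a_k\}$, $\psi^{A}=\lambda_A\,x_{a_1}\otimes\cdots\otimes x_{a_{k-1}}\otimes\chi^{()}$ with $x_{a_i}=\psi_{a_i}$ if $a_{i+1}=a_i+1$, else $\langle\psi_{a_i},\alpha\rangle\iota$, and $\lambda_A=\langle\psi_{a_k},\alpha\rangle$ if $a_k<n$, $1$ if $a_k=n$; $\psi^{[n]\setminus A}$ is the same with $\beta$ in place of $\alpha$. *)

theory Defs
  imports Complex_Main "HOL-Algebra.Group"
begin

text \<open>Superclass functions for the supercharacter theory of a finite group G with
superclasses {1} and G - {1}: functions constant on carrier G - {1}.
Only values on carrier G are meaningful.\<close>

definition scf :: "('g, 'b) monoid_scheme \<Rightarrow> ('g \<Rightarrow> complex) \<Rightarrow> bool" where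
  "scf G f \<longleftrightarrow> (\<forall>x\<in>carrier G. \<forall>y\<in>carrier G. x \<noteq> \<one>\<^bsub>G\<^esub> \<longrightarrow> y \<noteq> \<one>\<^bsub>G\<^esub> \<longrightarrow> f x = f y)"

definition ip :: "('g, 'b) monoid_scheme \<Rightarrow> ('g \<Rightarrow> complex) \<Rightarrow> ('g \<Rightarrow> complex) \<Rightarrow> complex" where
  "ip G \<psi> \<gamma> = (\<Sum>g\<in>carrier G. \<psi> g * cnj (\<gamma> g)) / of_nat (card (carrier G))"

text \<open>Homogeneous elements of degree n \<ge> 1 of H, i.e. elements of scf(G^(n-1)),
are represented as functions on lists (g_1,...,g_(n-1)) of group elements
(the last coordinate 1 of the trivial group is suppressed); they vanish on lists
of other lengths. The pure tensor psi_1 \<otimes> ... \<otimes> psi_(n-1) \<otimes> chi^() is:\<close>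

definition tens :: "('g \<Rightarrow> complex) list \<Rightarrow> 'g list \<Rightarrow> complex" where
  "tens \<psi>s gs = (if length gs = length \<psi>s then (\<Prod>i<length \<psi>s. (\<psi>s ! i) (gs ! i)) else 0)"

text \<open>Product of a degree-m element f with a degree-n element h (m, n \<ge> 1), bilinear
extension of the product on pure tensors: (f \<cdot> h)(g_1..g_(m+n-1)) =
f(g_1..g_(m-1)) iota(g_m) h(g_(m+1)..g_(m+n-1)).\<close>

definition hprod :: "('g \<Rightarrow> complex) \<Rightarrow> nat \<Rightarrow> ('g list \<Rightarrow> complex) \<Rightarrow> ('g list \<Rightarrow> complex) \<Rightarrow> 'g list \<Rightarrow> complex" where
  "hprod \<iota> m f h gs = (if m \<le> length gs then f (take (m - 1) gs) * \<iota> (gs ! (m - 1)) * h (drop m gs) else 0)"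

text \<open>Coproduct components: for psi = psi_1 \<otimes> ... \<otimes> psi_(n-1) \<otimes> chi^() (n = length psis + 1)
and nonempty A \<subseteq> {1..n}, psi^A (w.r.t. alpha) = cop_coef * tens cop_facs.\<close>

definition cop_coef :: "('g, 'b) monoid_scheme \<Rightarrow> ('g \<Rightarrow> complex) \<Rightarrow> ('g \<Rightarrow> complex) list \<Rightarrow> nat set \<Rightarrow> complex" where
  "cop_coef G \<alpha> \<psi>s A = (if Max A < length \<psi>s + 1 then ip G (\<psi>s ! (Max A - 1)) \<alpha> else 1)"

definition cop_facs :: "('g, 'b) monoid_scheme \<Rightarrow> ('g \<Rightarrow> complex) \<Rightarrow> ('g \<Rightarrow> complex) \<Rightarrow> ('g \<Rightarrow> complex) list \<Rightarrow> nat set \<Rightarrow> ('g \<Rightarrow> complex) list" where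
  "cop_facs G \<iota> \<alpha> \<psi>s A = map (\<lambda>a. if a + 1 \<in> A then \<psi>s ! (a - 1) else (\<lambda>g. ip G (\<psi>s ! (a - 1)) \<alpha> * \<iota> g))
      (butlast (sorted_list_of_set A))"

lemma cop_facs_length:
  "finite A \<Longrightarrow> length (cop_facs G \<iota> \<alpha> \<psi>s A) = card A - 1"
  by (simp add: cop_facs_def)

lemma cop_facs_shorter:
  assumes "A \<subseteq> {1..length \<psi>s + 1}" "A \<noteq> {}" "A \<noteq> {1..length \<psi>s + 1}"
  shows "length (cop_facs G \<iota> \<alpha> \<psi>s A) < length \<psi>s"
proof -
  have c: "card A < card {1..length \<psi>s + 1}" using assms by (intro psubset_card_mono) auto
  have "finite A" using assms finite_subset by blast
  hence "card A > 0" using assms by (simp add: card_gt_0_iff)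
  thus ?thesis using c \<open>finite A\<close> by (simp add: cop_facs_length)
qed

text \<open>Antipode on pure tensors, via the standard recursion for graded connected Hopf
algebras: for psi of degree n \<ge> 1,
 S(psi) = - sum_{A \<subset> [n], A \<noteq> [n]} S(psi^A) \<cdot> psi^([n]-A), with S(chi^emptyset) = chi^emptyset;
the A = {} term is psi itself. (S is linear; the scalars of psi^A are pulled out.)\<close>

function antipode :: "('g, 'b) monoid_scheme \<Rightarrow> ('g \<Rightarrow> complex) \<Rightarrow> ('g \<Rightarrow> complex) \<Rightarrow> ('g \<Rightarrow> complex)
    \<Rightarrow> ('g \<Rightarrow> complex) list \<Rightarrow> 'g list \<Rightarrow> complex" where
  "antipode G \<iota> \<alpha> \<beta> \<psi>s = (\<lambda>gs. - tens \<psi>s gs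
     - (\<Sum>A\<in>{A. A \<subseteq> {1..length \<psi>s + 1} \<and> A \<noteq> {} \<and> A \<noteq> {1..length \<psi>s + 1}}.
          cop_coef G \<alpha> \<psi>s A * cop_coef G \<beta> \<psi>s ({1..length \<psi>s + 1} - A) *
          hprod \<iota> (card A) (antipode G \<iota> \<alpha> \<beta> (cop_facs G \<iota> \<alpha> \<psi>s A))
                (tens (cop_facs G \<iota> \<beta> \<psi>s ({1..length \<psi>s + 1} - A))) gs))"
  by auto
termination
  by (relation "measure (\<lambda>(G, \<iota>, \<alpha>, \<beta>, \<psi>s). length \<psi>s)")
     (auto simp del: atLeastAtMost_iff intro!: cop_facs_shorter)

end

theory Submission
  imports Defs
begin

(* Write c = <tau, alpha> and suppose <tau, beta> = 0. In the antipode recursion for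
   tau^(m) = tau \<otimes> ... \<otimes> tau \<otimes> chi^(), a proper nonempty A \<subseteq> [m+1] containing m+1 leaves
   a complement inside [m], whose beta-coefficient is <tau, beta> = 0; any other A that is
   not an initial segment {1..k+1} has some b \<notin> A with b+1 \<in> A, which puts the zero factor
   <tau, beta> iota into the tensor of the complement. The initial segments contribute
   c S(tau^(k)) \<cdot> tau^(m-k-1), so by induction S(tau^(m)) = -(tau - c iota)^(m), the
   telescoping expansion of a multilinear tensor power. The theorem is the cases c = 0 and
   c = 1. *)

declare antipode.simps [simp del]

lemma tens_Cons: "tens (f # fs) gs = (case gs of [] \<Rightarrow> 0 | g # hs \<Rightarrow> f g * tens fs hs)"
  by (cases gs) (simp_all add: tens_def prod.lessThan_Suc_shift del: prod.lessThan_Suc)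

lemma tens_append: "tens (fs @ hs) gs = tens fs (take (length fs) gs) * tens hs (drop (length fs) gs)"
proof (induction fs arbitrary: gs)
  case Nil
  then show ?case by (simp add: tens_def)
next
  case (Cons f fs)
  then show ?case by (cases gs) (simp_all add: tens_Cons)
qed

lemma tens_snoc:
  "tens (fs @ [f]) gs = (if gs = [] then 0 else tens fs (butlast gs) * f (last gs))"
proof (cases gs rule: rev_cases)
  case (snoc hs h)
  then show ?thesis by (auto simp: tens_def nth_append)
qed (simp add: tens_def)

lemma tens_zero_factor:
  assumes "f \<in> set fs" "\<And>g. f g = 0"
  shows "tens fs gs = 0"
proof -
  obtain i where "i < length fs" "fs ! i = f" using assms(1) by (auto simp: in_set_conv_nth)
  then show ?thesis using assms(2) by (auto simp: tens_def intro: prod_zero)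
qed

lemma hprod_tens: "hprod \<iota> (Suc (length fs)) (tens fs) (tens hs) gs = tens (fs @ \<iota> # hs) gs"
proof (cases "length fs < length gs")
  case True
  then have "drop (length fs) gs = gs ! length fs # drop (Suc (length fs)) gs"
    by (simp add: Cons_nth_drop_Suc)
  with True show ?thesis by (simp add: hprod_def tens_append tens_Cons)
next
  case False
  then show ?thesis by (simp add: hprod_def tens_append tens_Cons)
qed

lemma hprod_uminus: "hprod \<iota> m (\<lambda>gs. - f gs) h gs = - hprod \<iota> m f h gs"
  by (simp add: hprod_def)

lemma replicate_Suc_snoc: "replicate (Suc n) x = replicate n x @ [x]"
  by (simp add: replicate_append_same)

lemma tens_replicate_diff_telescope:
  fixes \<tau> \<iota> :: "'g \<Rightarrow> complex" and c :: complex
  defines "\<sigma> \<equiv> \<lambda>g. \<tau> g - c * \<iota> g"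
  shows "tens (replicate m \<sigma>) gs = tens (replicate m \<tau>) gs
    - (\<Sum>k<m. c * tens (replicate k \<sigma> @ \<iota> # replicate (m - Suc k) \<tau>) gs)"
proof (induction m arbitrary: gs)
  case 0
  then show ?case by simp
next
  case (Suc m)
  show ?case
  proof (cases "gs = []")
    case True
    then show ?thesis by (simp add: tens_def)
  next
    case False
    let ?T = "tens (replicate m \<tau>) (butlast gs)"
    let ?R = "\<Sum>k<m. c * tens (replicate k \<sigma> @ \<iota> # replicate (m - Suc k) \<tau>) (butlast gs)"
    have shifted: "tens (replicate k \<sigma> @ \<iota> # replicate (Suc m - Suc k) \<tau>) gs
        = tens (replicate k \<sigma> @ \<iota> # replicate (m - Suc k) \<tau>) (butlast gs) * \<tau> (last gs)"
      if "k < m" for k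
      using that False tens_snoc[of "replicate k \<sigma> @ \<iota> # replicate (m - Suc k) \<tau>" \<tau> gs]
      by (simp add: replicate_Suc_snoc flip: Suc_diff_Suc del: replicate_Suc)
    have "tens (replicate (Suc m) \<sigma>) gs = (?T - ?R) * \<sigma> (last gs)"
      using False Suc.IH by (simp add: tens_snoc replicate_Suc_snoc del: replicate_Suc)
    also have "\<dots> = ?T * \<tau> (last gs) - ?R * \<tau> (last gs) - c * (?T - ?R) * \<iota> (last gs)"
      by (simp add: \<sigma>_def algebra_simps)
    also have "\<dots> = tens (replicate (Suc m) \<tau>) gs
        - (\<Sum>k<Suc m. c * tens (replicate k \<sigma> @ \<iota> # replicate (Suc m - Suc k) \<tau>) gs)"
      using False Suc.IH[of "butlast gs"] shifted
      by (simp add: tens_snoc replicate_Suc_snoc sum_distrib_right mult.assoc del: replicate_Suc)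
    finally show ?thesis .
  qed
qed

lemma cop_coef_replicate:
  assumes "finite A" "A \<noteq> {}" "A \<subseteq> {1..m}"
  shows "cop_coef G \<alpha> (replicate m \<tau>) A = ip G \<tau> \<alpha>"
proof -
  have "Max A \<in> {1..m}" using assms Max_in by blast
  then have "Max A < m + 1" "replicate m \<tau> ! (Max A - 1) = \<tau>" by auto
  then show ?thesis by (simp add: cop_coef_def)
qed

lemma cop_coef_last:
  assumes "finite A" "length \<psi>s + 1 \<in> A" "A \<subseteq> {1..length \<psi>s + 1}"
  shows "cop_coef G \<alpha> \<psi>s A = 1"
proof -
  have "Max A = length \<psi>s + 1" using assms by (intro Max_eqI) auto
  then show ?thesis by (simp add: cop_coef_def)
qed

lemma cop_facs_replicate_interval:
  assumes "1 \<le> i" "j \<le> m + 1"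
  shows "cop_facs G \<iota> \<alpha> (replicate m \<tau>) {i..j} = replicate (j - i) \<tau>"
proof -
  have "{i..j} = {i..<Suc j}" by auto
  then have "cop_facs G \<iota> \<alpha> (replicate m \<tau>) {i..j} = map (\<lambda>a. \<tau>) [i..<j]"
    unfolding cop_facs_def using assms by (auto intro!: map_cong)
  then show ?thesis by (simp add: map_replicate_const)
qed

lemma in_set_butlast_if_less:
  fixes b c :: "'a::linorder"
  assumes "sorted xs" "b \<in> set xs" "c \<in> set xs" "b < c"
  shows "b \<in> set (butlast xs)"
  using assms by (induction xs) (auto split: if_splits)

lemma cop_facs_gap_factor:
  assumes "finite B" "b \<in> B" "Suc b \<notin> B" "c \<in> B" "b < c"
  shows "(\<lambda>g. ip G (\<psi>s ! (b - 1)) \<alpha> * \<iota> g) \<in> set (cop_facs G \<iota> \<alpha> \<psi>s B)"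
proof -
  have "b \<in> set (butlast (sorted_list_of_set B))"
    using assms by (intro in_set_butlast_if_less[where c = c]) auto
  then show ?thesis
    unfolding cop_facs_def set_map by (rule image_eqI[rotated]) (simp add: assms(3))
qed

lemma down_closed_eq_atLeastAtMost_Max:
  fixes A :: "nat set"
  assumes "finite A" "A \<noteq> {}" "0 \<notin> A" and down: "\<And>b. 0 < b \<Longrightarrow> Suc b \<in> A \<Longrightarrow> b \<in> A"
  shows "A = {1..Max A}"
proof
  show "A \<subseteq> {1..Max A}"
  proof
    fix x assume "x \<in> A"
    then have "x \<noteq> 0" "x \<le> Max A" using assms(1,3) by (metis, simp)
    then show "x \<in> {1..Max A}" by simp
  qed
  show "{1..Max A} \<subseteq> A"
  proof
    fix x assume "x \<in> {1..Max A}"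
    then have "x \<le> Max A" "0 < x" by auto
    then show "x \<in> A"
    proof (induction x rule: inc_induct)
      case base
      then show ?case using assms(1,2) by simp
    next
      case (step n)
      then have "Suc n \<in> A" by simp
      with \<open>0 < n\<close> show ?case by (rule down)
    qed
  qed
qed

lemma antipode_unfold:
  "antipode G \<iota> \<alpha> \<beta> \<psi>s gs = - tens \<psi>s gs
     - (\<Sum>A\<in>{A. A \<subseteq> {1..length \<psi>s + 1} \<and> A \<noteq> {} \<and> A \<noteq> {1..length \<psi>s + 1}}.
          cop_coef G \<alpha> \<psi>s A * cop_coef G \<beta> \<psi>s ({1..length \<psi>s + 1} - A) *
          hprod \<iota> (card A) (antipode G \<iota> \<alpha> \<beta> (cop_facs G \<iota> \<alpha> \<psi>s A))
                (tens (cop_facs G \<iota> \<beta> \<psi>s ({1..length \<psi>s + 1} - A))) gs)"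
  by (subst antipode.simps) (rule refl)

lemma antipode_summand_eq_0:
  assumes "ip G \<tau> \<beta> = 0" and A: "A \<subseteq> {1..m + 1}" "A \<noteq> {}" "A \<noteq> {1..m + 1}"
    and not_initial: "A \<notin> (\<lambda>k. {1..Suc k}) ` {..<m}"
  shows "cop_coef G \<alpha> (replicate m \<tau>) A * cop_coef G \<beta> (replicate m \<tau>) ({1..m + 1} - A)
    * hprod \<iota> (card A) f (tens (cop_facs G \<iota> \<beta> (replicate m \<tau>) ({1..m + 1} - A))) gs = 0"
proof (cases "m + 1 \<in> A")
  case True
  then have "{1..m + 1} - A \<subseteq> {1..m}" "{1..m + 1} - A \<noteq> {}"
    using A by (auto simp: le_Suc_eq)
  then have "cop_coef G \<beta> (replicate m \<tau>) ({1..m + 1} - A) = 0"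
    using assms(1) by (simp add: cop_coef_replicate)
  then show ?thesis by simp
next
  case False
  have fin: "finite A" using A(1) finite_subset by blast
  have Am: "A \<subseteq> {1..m}" using A(1) False by (auto simp: le_Suc_eq)
  then have "0 \<notin> A" by auto
  have "A \<noteq> {1..Max A}"
  proof
    assume eq: "A = {1..Max A}"
    have "Max A \<in> {1..m}" using fin A(2) Am Max_in by blast
    then have "A = {1..Suc (Max A - 1)}" "Max A - 1 < m" using eq by auto
    then show False using not_initial by blast
  qed
  then obtain b where b: "0 < b" "Suc b \<in> A" "b \<notin> A"
    using down_closed_eq_atLeastAtMost_Max[OF fin A(2) \<open>0 \<notin> A\<close>] by blast
  define B where "B = {1..m + 1} - A"
  have "b \<in> B" "Suc b \<notin> B" "m + 1 \<in> B" "b < m + 1"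
    using b Am False by (auto simp: B_def)
  then have "(\<lambda>g. ip G (replicate m \<tau> ! (b - 1)) \<beta> * \<iota> g) \<in> set (cop_facs G \<iota> \<beta> (replicate m \<tau>) B)"
    by (intro cop_facs_gap_factor) (simp_all add: B_def)
  moreover have "replicate m \<tau> ! (b - 1) = \<tau>" using b(1) \<open>b < m + 1\<close> by simp
  ultimately have "tens (cop_facs G \<iota> \<beta> (replicate m \<tau>) B) hs = 0" for hs
    using assms(1) by (intro tens_zero_factor[where f = "\<lambda>g. ip G \<tau> \<beta> * \<iota> g"]) simp_all
  then show ?thesis by (simp add: hprod_def B_def)
qed

lemma antipode_replicate:
  assumes "ip G \<tau> \<beta> = 0"
  shows "antipode G \<iota> \<alpha> \<beta> (replicate m \<tau>) gs
    = - tens (replicate m (\<lambda>g. \<tau> g - ip G \<tau> \<alpha> * \<iota> g)) gs"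
proof (induction m arbitrary: gs rule: less_induct)
  case (less m)
  define c where "c = ip G \<tau> \<alpha>"
  define \<sigma> where "\<sigma> = (\<lambda>g. \<tau> g - c * \<iota> g)"
  let ?S = "{A. A \<subseteq> {1..m + 1} \<and> A \<noteq> {} \<and> A \<noteq> {1..m + 1}}"
  let ?F = "\<lambda>A. cop_coef G \<alpha> (replicate m \<tau>) A * cop_coef G \<beta> (replicate m \<tau>) ({1..m + 1} - A) *
      hprod \<iota> (card A) (antipode G \<iota> \<alpha> \<beta> (cop_facs G \<iota> \<alpha> (replicate m \<tau>) A))
        (tens (cop_facs G \<iota> \<beta> (replicate m \<tau>) ({1..m + 1} - A))) gs"
  have initial_term: "?F {1..Suc k} = - (c * tens (replicate k \<sigma> @ \<iota> # replicate (m - Suc k) \<tau>) gs)"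
    if "k < m" for k
  proof -
    have "{1..m + 1} - {1..Suc k} = {Suc (Suc k)..m + 1}" by auto
    moreover have "antipode G \<iota> \<alpha> \<beta> (replicate k \<tau>) = (\<lambda>gs. - tens (replicate k \<sigma>) gs)"
      using less.IH that by (auto simp: c_def \<sigma>_def)
    ultimately show ?thesis
      using that by (simp add: c_def cop_coef_replicate cop_coef_last cop_facs_replicate_interval
          hprod_uminus hprod_tens[of _ "replicate k \<sigma>", simplified])
  qed
  have "finite ?S" by (rule finite_subset[of _ "Pow {1..m + 1}"]) auto
  then have "sum ?F ?S = sum ?F ((\<lambda>k. {1..Suc k}) ` {..<m})"
    using antipode_summand_eq_0[OF assms] by (intro sum.mono_neutral_right) auto
  also have "\<dots> = (\<Sum>k<m. ?F {1..Suc k})"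
    by (rule sum.reindex_cong[where l = "\<lambda>k. {1..Suc k}"]) (auto simp: inj_on_def)
  also have "\<dots> = (\<Sum>k<m. - (c * tens (replicate k \<sigma> @ \<iota> # replicate (m - Suc k) \<tau>) gs))"
    using initial_term by simp
  finally have "antipode G \<iota> \<alpha> \<beta> (replicate m \<tau>) gs
      = - tens (replicate m \<tau>) gs + (\<Sum>k<m. c * tens (replicate k \<sigma> @ \<iota> # replicate (m - Suc k) \<tau>) gs)"
    by (subst antipode_unfold) (simp add: sum_negf)
  also have "\<dots> = - tens (replicate m \<sigma>) gs"
    unfolding \<sigma>_def tens_replicate_diff_telescope by simp
  finally show ?case by (simp add: c_def \<sigma>_def)
qed

theorem mainTheorem11:
  fixes G :: "('g, 'b) monoid_scheme"
    and \<iota> \<alpha> \<beta> \<tau> :: "'g \<Rightarrow> complex" and n :: nat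
  assumes "group G" and "finite (carrier G)" and "carrier G \<noteq> {\<one>\<^bsub>G\<^esub>}"
    and "scf G \<iota>" and "scf G \<alpha>" and "scf G \<beta>"
    and "ip G \<iota> \<alpha> = 1" and "ip G \<iota> \<beta> = 1"
    and "scf G \<tau>" and "n \<ge> 1"
  shows "((\<forall>g\<in>carrier G. \<alpha> g = \<beta> g) \<and> (\<exists>g\<in>carrier G. \<tau> g \<noteq> 0) \<and> ip G \<tau> \<beta> = 0 \<and>
          (\<forall>f. scf G f \<longrightarrow> (\<exists>a b. \<forall>g\<in>carrier G. f g = a * \<tau> g + b * \<iota> g))
        \<longrightarrow> (\<forall>gs. set gs \<subseteq> carrier G \<longrightarrow>
              antipode G \<iota> \<alpha> \<beta> (replicate (n - 1) \<tau>) gs = - tens (replicate (n - 1) \<tau>) gs))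
       \<and> ((\<exists>g\<in>carrier G. \<alpha> g \<noteq> \<beta> g) \<and> ip G \<tau> \<alpha> = 1 \<and> ip G \<tau> \<beta> = 0
        \<longrightarrow> (\<forall>gs. set gs \<subseteq> carrier G \<longrightarrow>
              antipode G \<iota> \<alpha> \<beta> (replicate (n - 1) \<tau>) gs
                = - tens (replicate (n - 1) (\<lambda>g. \<tau> g - \<iota> g)) gs))"
proof (intro conjI impI allI)
  fix gs
  assume equal_case: "(\<forall>g\<in>carrier G. \<alpha> g = \<beta> g) \<and> (\<exists>g\<in>carrier G. \<tau> g \<noteq> 0) \<and> ip G \<tau> \<beta> = 0 \<and>
          (\<forall>f. scf G f \<longrightarrow> (\<exists>a b. \<forall>g\<in>carrier G. f g = a * \<tau> g + b * \<iota> g))"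
  then have "ip G \<tau> \<alpha> = ip G \<tau> \<beta>" unfolding ip_def by (metis (no_types, lifting) sum.cong)
  then show "antipode G \<iota> \<alpha> \<beta> (replicate (n - 1) \<tau>) gs = - tens (replicate (n - 1) \<tau>) gs"
    using equal_case antipode_replicate[of G \<tau> \<beta> \<iota> \<alpha>] by simp
next
  fix gs
  assume "(\<exists>g\<in>carrier G. \<alpha> g \<noteq> \<beta> g) \<and> ip G \<tau> \<alpha> = 1 \<and> ip G \<tau> \<beta> = 0"
  then show "antipode G \<iota> \<alpha> \<beta> (replicate (n - 1) \<tau>) gs
      = - tens (replicate (n - 1) (\<lambda>g. \<tau> g - \<iota> g)) gs"
    using antipode_replicate[of G \<tau> \<beta> \<iota> \<alpha>] by simp
qed

end
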